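(* Consider the infinite hydrodynamic chain (with $\partial=\partial_x$) $$\partial_{t_2}u^{-k}=\big(k\,u^{-(k+1)}-(k-2)u^{-(k-1)}+u^{-k}u^1\big)\partial u^0+u^0u^{-k}\partial u^1+u^0\big(\partial u^{-(k-1)}+\partial u^{-(k+1)}\big),\quad k>2,$$ $$\partial_{t_2}u^{-2}=\big(u^{-2}u^1+2u^{-3}\big)\partial u^0+u^0u^{-2}\partial u^1+u^0\partial u^{-3}+2u^0\partial u^{-1},$$ $$\partial_{t_2}u^{-1}=\big(u^{-1}u^1+u^{-2}\big)\partial u^0+u^0u^{-1}\partial u^1+u^0\partial u^{-2},$$ $$\partial_{t_2}u^0=u^0u^1\partial u^0+(u^0)^2\partial u^1,$$ $$\partial_{t_2}u^1=\big(2u^2-(u^1)^2\big)\partial u^0-u^0u^1\partial u^1+u^0\partial u^2,$$ $$\partial_{t_2}u^k=\big((k+1)u^{k+1}-(k-1)u^{k-1}-u^ku^1\big)\partial u^0-u^0u^k\partial u^1+u^0\big(\partial u^{k+1}+\partial u^{k-1}\big),\quad k>1,$$ for functions $u^\ell(x,\mathbf{t})$, with initial condition $u^{-k}(x,\mathbf{0})=0$ ($k>1$), $u^{-1}(x,\mathbf{0})=\tfrac12$, $u^0(x,\mathbf{0})=x$, $u^k(x,\mathbf{0})=2$ ($k>0$). If $u^{-k}(x,\mathbf{t})\equiv0$ for all $k>2$, then there exists a reduction of the chain, compatible with this initial condition, of the form $$u^{-2}(x,\mathbf{t})=0,\quad u^{-1}(x,\mathbf{t})=u^{-1}(\mathbf{t}),\quad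 u^0(x,\mathbf{t})=2x\,u^{-1}(\mathbf{t}),\quad u^k(x,\mathbf{t})=u^k(\mathbf{t})\ (k>0),$$ where the functions $u^{-1}(\mathbf{t})$, $u^k(\mathbf{t})$ ($k>0$) solve $$\partial_{t_2}u^{-1}=2(u^{-1})^2u^1,\qquad \partial_{t_2}u^k=2u^{-1}\big((k+1)u^{k+1}-u^1u^k-(k-1)u^{k-1}\big),\quad k>0.$$
   Context: $\mathbf{t}=(t_2,t_4,\dots)$ denotes the even coupling constants; $x\in\mathbb{R}$. *)

theory Defs
  imports "HOL-Analysis.Analysis"
begin

text \<open>Times: t :: nat \<Rightarrow> real, with t 0 = t_2, t 1 = t_4, ...\<close>

type_synonym field = "int \<Rightarrow> real \<Rightarrow> (nat \<Rightarrow> real) \<Rightarrow> real"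

definition zero_time :: "nat \<Rightarrow> real" where
  "zero_time = (\<lambda>_. 0)"

definition pdx :: "field \<Rightarrow> int \<Rightarrow> real \<Rightarrow> (nat \<Rightarrow> real) \<Rightarrow> real" where
  "pdx u l x t = deriv (\<lambda>y. u l y t) x"

definition pdt2 :: "((nat \<Rightarrow> real) \<Rightarrow> real) \<Rightarrow> (nat \<Rightarrow> real) \<Rightarrow> real" where
  "pdt2 f t = deriv (\<lambda>s. f (t(0 := s))) (t 0)"

definition t2_differentiable :: "((nat \<Rightarrow> real) \<Rightarrow> real) \<Rightarrow> bool" where
  "t2_differentiable f \<longleftrightarrow> (\<forall>t. (\<lambda>s. f (t(0 := s))) differentiable (at (t 0)))"

definition chain_solution :: "field \<Rightarrow> bool" where
  "chain_solution u \<longleftrightarrow>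
    (\<forall>l x t. (\<lambda>y. u l y t) differentiable (at x)) \<and>
    (\<forall>l x. t2_differentiable (u l x)) \<and>
    (\<forall>x t.
      let U = (\<lambda>l. u l x t); X = (\<lambda>l. pdx u l x t); T = (\<lambda>l. pdt2 (u l x) t) in
      (\<forall>k::int. k > 2 \<longrightarrow>
         T (-k) = (of_int k * U (-(k+1)) - of_int (k-2) * U (-(k-1)) + U (-k) * U 1) * X 0
                  + U 0 * U (-k) * X 1 + U 0 * (X (-(k-1)) + X (-(k+1)))) \<and>
      T (-2) = (U (-2) * U 1 + 2 * U (-3)) * X 0 + U 0 * U (-2) * X 1 + U 0 * X (-3)
               + 2 * U 0 * X (-1) \<and>
      T (-1) = (U (-1) * U 1 + U (-2)) * X 0 + U 0 * U (-1) * X 1 + U 0 * X (-2) \<and>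
      T 0 = U 0 * U 1 * X 0 + (U 0)^2 * X 1 \<and>
      T 1 = (2 * U 2 - (U 1)^2) * X 0 - U 0 * U 1 * X 1 + U 0 * X 2 \<and>
      (\<forall>k::int. k > 1 \<longrightarrow>
         T k = (of_int (k+1) * U (k+1) - of_int (k-1) * U (k-1) - U k * U 1) * X 0
               - U 0 * U k * X 1 + U 0 * (X (k+1) + X (k-1))))"

definition chain_initial :: "field \<Rightarrow> bool" where
  "chain_initial u \<longleftrightarrow> (\<forall>x.
     (\<forall>k::int. k > 1 \<longrightarrow> u (-k) x zero_time = 0) \<and>
     u (-1) x zero_time = 1/2 \<and>
     u 0 x zero_time = x \<and>
     (\<forall>k::int. k > 0 \<longrightarrow> u k x zero_time = 2))"

text \<open>The reduction ansatz: a t = u^{-1}(t), b k t = u^k(t) for k > 0 (b 0 is unused).\<close>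
definition reduction :: "((nat \<Rightarrow> real) \<Rightarrow> real) \<Rightarrow> (nat \<Rightarrow> (nat \<Rightarrow> real) \<Rightarrow> real) \<Rightarrow> field" where
  "reduction a b = (\<lambda>l x t.
     if l \<le> -2 then 0
     else if l = -1 then a t
     else if l = 0 then 2 * x * a t
     else b (nat l) t)"

definition reduced_system :: "((nat \<Rightarrow> real) \<Rightarrow> real) \<Rightarrow> (nat \<Rightarrow> (nat \<Rightarrow> real) \<Rightarrow> real) \<Rightarrow> bool" where
  "reduced_system a b \<longleftrightarrow>
     t2_differentiable a \<and> (\<forall>k>0. t2_differentiable (b k)) \<and>
     (\<forall>t. pdt2 a t = 2 * (a t)^2 * b 1 t) \<and>
     (\<forall>k>0. \<forall>t. pdt2 (b k) t =
        2 * a t * (real (k+1) * b (k+1) t - b 1 t * b k t - real (k-1) * b (k-1) t))"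

end

theory Submission
  imports Defs
begin

text \<open>On the ansatz only \<open>\<partial>u\<^sup>0 = 2 u\<^sup>-\<^sup>1\<close> is nonzero, so the equations for
  \<open>u\<^sup>-\<^sup>k\<close>, \<open>k \<ge> 2\<close>, hold trivially, the one for \<open>u\<^sup>0 = 2x u\<^sup>-\<^sup>1\<close> is \<open>2x\<close> times the one
  for \<open>u\<^sup>-\<^sup>1\<close>, and the equations for \<open>u\<^sup>1\<close> and \<open>u\<^sup>k\<close>, \<open>k > 1\<close>, become the
  \<open>x\<close>-independent equations of the reduced system (the \<open>u\<^sup>1\<close> one being its
  case \<open>k = 1\<close>).  For the initial data, \<open>u\<^sup>0(x, 0) = x\<close> is implied by \<open>u\<^sup>-\<^sup>1(0) = 1/2\<close>.\<close>

lemma all_int_greater_iff: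
  assumes "0 \<le> m"
  shows "(\<forall>k::int. m < k \<longrightarrow> P k) \<longleftrightarrow> (\<forall>n::nat. m < int n \<longrightarrow> P (int n))"
proof (intro iffI allI impI)
  fix k assume "\<forall>n::nat. m < int n \<longrightarrow> P (int n)" and "m < k"
  moreover from \<open>m < k\<close> assms have "0 \<le> k"
    by linarith
  then obtain n where "k = int n"
    using zero_le_imp_eq_int by blast
  ultimately show "P k" by blast
qed simp

lemma pdt2_const [simp]: "pdt2 (\<lambda>t. c) t = 0"
  by (simp add: pdt2_def)

lemma pdt2_cmult:
  assumes "t2_differentiable f"
  shows "pdt2 (\<lambda>t. c * f t) t = c * pdt2 f t"
proof -
  have "(\<lambda>s. f (t(0 := s))) differentiable (at (t 0))"
    using assms by (simp add: t2_differentiable_def)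
  then show ?thesis
    unfolding pdt2_def
    using DERIV_deriv_iff_field_differentiable DERIV_deriv_iff_real_differentiable deriv_cmult
    by blast
qed

lemma t2_differentiable_const: "t2_differentiable (\<lambda>t. c)"
  by (simp add: t2_differentiable_def)

lemma t2_differentiable_cmult:
  "t2_differentiable f \<Longrightarrow> t2_differentiable (\<lambda>t. c * f t)"
  unfolding t2_differentiable_def by (auto intro: derivative_intros)

lemma reduction_le_minus_two [simp]: "l \<le> -2 \<Longrightarrow> reduction a b l x = (\<lambda>t. 0)"
  by (simp add: reduction_def)

lemma reduction_minus_one [simp]: "reduction a b (-1) x = a"
  by (simp add: reduction_def)

lemma reduction_zero [simp]: "reduction a b 0 x = (\<lambda>t. 2 * x * a t)"
  by (simp add: reduction_def)

lemma reduction_pos [simp]: "l > 0 \<Longrightarrow> reduction a b l x = b (nat l)"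
  by (simp add: reduction_def)

lemma has_real_derivative_reduction:
  "((\<lambda>y. reduction a b l y t) has_real_derivative (if l = 0 then 2 * a t else 0)) (at x)"
proof (cases "l = 0")
  case True
  then show ?thesis
    by (auto intro!: derivative_eq_intros)
next
  case False
  then have "(\<lambda>y. reduction a b l y t) = (\<lambda>y. reduction a b l 0 t)"
    by (auto simp: reduction_def)
  with False show ?thesis
    by simp
qed

lemma differentiable_reduction: "(\<lambda>y. reduction a b l y t) differentiable (at x)"
  using has_real_derivative_reduction real_differentiable_def by blast

lemma pdx_reduction: "pdx (reduction a b) l x t = (if l = 0 then 2 * a t else 0)"
  unfolding pdx_def by (rule DERIV_imp_deriv[OF has_real_derivative_reduction])

lemma t2_differentiable_reduction_iff:
  "(\<forall>l x. t2_differentiable (reduction a b l x)) \<longleftrightarrow>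
     t2_differentiable a \<and> (\<forall>k>0. t2_differentiable (b k))"
proof
  assume "\<forall>l x. t2_differentiable (reduction a b l x)"
  then show "t2_differentiable a \<and> (\<forall>k>0. t2_differentiable (b k))"
    by (metis nat_int of_nat_0_less_iff reduction_minus_one reduction_pos)
next
  assume a: "t2_differentiable a \<and> (\<forall>k>0. t2_differentiable (b k))"
  show "\<forall>l x. t2_differentiable (reduction a b l x)"
  proof (intro allI)
    fix l :: int and x :: real
    consider "l \<le> -2" | "l = -1" | "l = 0" | "l > 0"
      by linarith
    then show "t2_differentiable (reduction a b l x)"
      by cases (use a in \<open>simp_all add: t2_differentiable_const t2_differentiable_cmult\<close>)
  qed
qed

definition chain_on_reduction ::
    "((nat \<Rightarrow> real) \<Rightarrow> real) \<Rightarrow> (nat \<Rightarrow> (nat \<Rightarrow> real) \<Rightarrow> real) \<Rightarrow> bool" where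
  "chain_on_reduction a b \<longleftrightarrow>
     t2_differentiable a \<and> (\<forall>k>0. t2_differentiable (b k)) \<and>
     (\<forall>t. pdt2 a t = 2 * (a t)^2 * b 1 t) \<and>
     (\<forall>x t. pdt2 (\<lambda>t. 2 * x * a t) t = 2 * x * (2 * (a t)^2 * b 1 t)) \<and>
     (\<forall>t. pdt2 (b 1) t = 2 * a t * (2 * b 2 t - (b 1 t)^2)) \<and>
     (\<forall>k>1. \<forall>t. pdt2 (b k) t =
        2 * a t * (real (k+1) * b (k+1) t - b 1 t * b k t - real (k-1) * b (k-1) t))"

lemma chain_solution_reduction_iff: "chain_solution (reduction a b) \<longleftrightarrow> chain_on_reduction a b"
  unfolding chain_solution_def chain_on_reduction_def Let_def pdx_reduction
  by (simp add: differentiable_reduction t2_differentiable_reduction_iff all_int_greater_iff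
      all_conj_distrib nat_add_distrib nat_diff_distrib of_nat_diff power2_eq_square algebra_simps)
    blast

lemma reduced_system_iff_chain_on_reduction: "reduced_system a b \<longleftrightarrow> chain_on_reduction a b"
proof -
  have split_pos: "(\<forall>k>0. P k) \<longleftrightarrow> P 1 \<and> (\<forall>k>1. P k)" for P :: "nat \<Rightarrow> bool"
    by (metis One_nat_def less_one linorder_neqE_nat not_less_zero)
  have u0_equation: "pdt2 (\<lambda>t. 2 * x * a t) t = 2 * x * (2 * (a t)^2 * b 1 t)"
    if "t2_differentiable a" and "\<forall>t. pdt2 a t = 2 * (a t)^2 * b 1 t" for x t
    using that pdt2_cmult[of a "2 * x"] by (simp add: mult.assoc)
  show ?thesis
    unfolding reduced_system_def chain_on_reduction_def split_pos
    using u0_equation by (auto simp: power2_eq_square numeral_2_eq_2)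
qed

lemma chain_initial_reduction_iff:
  "chain_initial (reduction a b) \<longleftrightarrow> a zero_time = 1/2 \<and> (\<forall>k>0. b k zero_time = 2)"
  unfolding chain_initial_def by (auto simp: all_int_greater_iff all_conj_distrib)

theorem theorem5p2:
  fixes a :: "(nat \<Rightarrow> real) \<Rightarrow> real" and b :: "nat \<Rightarrow> (nat \<Rightarrow> real) \<Rightarrow> real"
  shows "(chain_solution (reduction a b) \<longleftrightarrow> reduced_system a b) \<and>
         (chain_initial (reduction a b) \<longleftrightarrow>
            a zero_time = 1/2 \<and> (\<forall>k>0. b k zero_time = 2))"
  by (simp only: chain_solution_reduction_iff reduced_system_iff_chain_on_reduction
      chain_initial_reduction_iff)

end
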